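(* Suppose $\psi\in\Psi^*$, $s,s'\in\Omega_2$ and $|s-s'|\le(\mathcal{L}\log\mathcal{L})^{-1}$. Then $$\frac{F(s,\psi)}{F(s',\psi)}=1+O\big(|s-s'|\mathcal{L}\log\mathcal{L}\big).$$
   Context: Standing conventions: $\chi$ is a real primitive Dirichlet character of modulus $D$, where $D$ exceeds a sufficiently large absolute constant; implied constants are absolute. $\mathcal{L}=\log D$, $Q=\exp(\mathcal{L}^2)$, $\alpha=\mathcal{L}^{-2}$, $s_0=\tfrac12+iD$. Let $\mathcal{Q}$ be the set of integers $q$ with $Q<q<2Q$, $\gcd(q,6)=1$, $q$ squarefree; $\Psi_q$ the set of primitive characters $\psi\bmod q$ with $\psi\chi$ primitive modulo $\mathrm{lcm}(q,D)$; $\Psi=\bigcup_q\Psi_q$. Define $\nu,\upsilon$ by $\sum\nu(n)n^{-s}=\zeta(s)L(s,\chi)$, $\sum\upsilon(n)n^{-s}=\zeta(s)^{-1}L(s,\chi)^{-1}$; $F(s,\psi)=\sum_{n\le D^5}\nu(n)\psi(n)n^{-s}$, $G(s,\psi)=\sum_{n\le D^5}\upsilon(n)\psi(n)n^{-s}$; $\Delta(s,\psi)=L(s,\psi)/L(1-s,\bar\psi)$, $\Delta_1(s,\psi)=\Delta(s,\psi)\Delta(s,\psi\chi)$, $\mathcal{F}(s,\psi)=F(s,\psi)+\Delta_1(s,\psi)F(1-s,\bar\psi)$. $\Omega_1=\{s:-2\alpha^{1/2}<\mathrm{Re}(s-s_0)<1,\ |\mathrm{Im}(s-s_0)|<1+20\mathcal{L}\}$,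 $\Omega_2=\{s:-\tfrac1{10}\alpha\log\mathcal{L}<\mathrm{Re}(s-s_0)<\tfrac12,\ |\mathrm{Im}(s-s_0)|<1+10\mathcal{L}\}$. $\Psi^*$ is the set of $\psi\in\Psi$ with (I1) $\sup_{\Omega_1}\{|F|+|G|\}<\mathcal{L}^3\log\mathcal{L}$, (I2) $\sup_{\Omega_1}|FG-1|<\tfrac12$, (I3) $\sup_{\Omega_2}|L(s,\psi)L(s,\psi\chi)-\mathcal{F}(s,\psi)|<\mathcal{L}^{-24/5}$. *)

theory Defs
  imports "HOL-Complex_Analysis.Complex_Analysis" "HOL-Computational_Algebra.Squarefree"
          "HOL-Number_Theory.Cong"
begin

definition dchar :: "nat \<Rightarrow> (nat \<Rightarrow> complex) \<Rightarrow> bool" where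
  "dchar q \<psi> \<longleftrightarrow> q > 0 \<and> (\<forall>m n. \<psi> (m * n) = \<psi> m * \<psi> n)
      \<and> (\<forall>n. \<psi> (n + q) = \<psi> n) \<and> (\<forall>n. \<psi> n = 0 \<longleftrightarrow> \<not> coprime n q)"

text \<open>Primitive: no proper divisor d of q is an induced modulus.\<close>
definition primitive_dchar :: "nat \<Rightarrow> (nat \<Rightarrow> complex) \<Rightarrow> bool" where
  "primitive_dchar q \<psi> \<longleftrightarrow> dchar q \<psi> \<and>
     (\<forall>d. d dvd q \<and> d < q \<longrightarrow> \<not> (\<forall>n. coprime n q \<and> [n = 1] (mod d) \<longrightarrow> \<psi> n = 1))"

definition real_primitive_dchar :: "nat \<Rightarrow> (nat \<Rightarrow> complex) \<Rightarrow> bool" where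
  "real_primitive_dchar D chi \<longleftrightarrow> primitive_dchar D chi \<and> (\<forall>n. chi n \<in> \<real>)"

definition cnj_char :: "(nat \<Rightarrow> complex) \<Rightarrow> nat \<Rightarrow> complex" where
  "cnj_char \<psi> n = cnj (\<psi> n)"

definition mult_char :: "(nat \<Rightarrow> complex) \<Rightarrow> (nat \<Rightarrow> complex) \<Rightarrow> nat \<Rightarrow> complex" where
  "mult_char \<psi> chi n = \<psi> n * chi n"

text \<open>For a non-principal primitive character, L(s,psi) is the (unique) entire function
  agreeing with the Dirichlet series on Re s > 1.\<close>
definition Lfun :: "complex \<Rightarrow> (nat \<Rightarrow> complex) \<Rightarrow> complex" where
  "Lfun s \<psi> = (THE f. f holomorphic_on UNIV \<and>
      (\<forall>z. Re z > 1 \<longrightarrow> f z = (\<Sum>n. \<psi> (Suc n) * of_nat (Suc n) powr (- z)))) s"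

text \<open>Delta(s,psi) = L(s,psi)/L(1-s,conj psi), taken as a meromorphic function, i.e.\ its value
  is the limit of the quotient (removable singularities at zeros of the denominator).\<close>
definition Delta :: "complex \<Rightarrow> (nat \<Rightarrow> complex) \<Rightarrow> complex" where
  "Delta s \<psi> = Lim (at s) (\<lambda>z. Lfun z \<psi> / Lfun (1 - z) (cnj_char \<psi>))"

definition Delta1 :: "(nat \<Rightarrow> complex) \<Rightarrow> complex \<Rightarrow> (nat \<Rightarrow> complex) \<Rightarrow> complex" where
  "Delta1 chi s \<psi> = Delta s \<psi> * Delta s (mult_char \<psi> chi)"

definition moebius :: "nat \<Rightarrow> int" where
  "moebius n = (if n > 0 \<and> squarefree n then (-1) ^ card (prime_factors n) else 0)"

text \<open>zeta(s) L(s,chi) = sum nu(n) n^-s, i.e. nu = 1 * chi (Dirichlet convolution).\<close>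
definition nu :: "(nat \<Rightarrow> complex) \<Rightarrow> nat \<Rightarrow> complex" where
  "nu chi n = (\<Sum>d | d dvd n. chi d)"

text \<open>zeta(s)^-1 L(s,chi)^-1 = sum upsilon(n) n^-s, i.e. upsilon = mu * (mu chi).\<close>
definition upsilon :: "(nat \<Rightarrow> complex) \<Rightarrow> nat \<Rightarrow> complex" where
  "upsilon chi n = (\<Sum>d | d dvd n. of_int (moebius d) * of_int (moebius (n div d)) * chi (n div d))"

definition LL :: "nat \<Rightarrow> real" where "LL D = ln (real D)"
definition QQ :: "nat \<Rightarrow> real" where "QQ D = exp (LL D ^ 2)"
definition alpha :: "nat \<Rightarrow> real" where "alpha D = LL D powr (-2)"
definition s0 :: "nat \<Rightarrow> complex" where "s0 D = Complex (1/2) (real D)"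

definition Fpol :: "nat \<Rightarrow> (nat \<Rightarrow> complex) \<Rightarrow> complex \<Rightarrow> (nat \<Rightarrow> complex) \<Rightarrow> complex" where
  "Fpol D chi s \<psi> = (\<Sum>n\<in>{1..D^5}. nu chi n * \<psi> n * of_nat n powr (- s))"

definition Gpol :: "nat \<Rightarrow> (nat \<Rightarrow> complex) \<Rightarrow> complex \<Rightarrow> (nat \<Rightarrow> complex) \<Rightarrow> complex" where
  "Gpol D chi s \<psi> = (\<Sum>n\<in>{1..D^5}. upsilon chi n * \<psi> n * of_nat n powr (- s))"

definition FF :: "nat \<Rightarrow> (nat \<Rightarrow> complex) \<Rightarrow> complex \<Rightarrow> (nat \<Rightarrow> complex) \<Rightarrow> complex" where
  "FF D chi s \<psi> = Fpol D chi s \<psi> + Delta1 chi s \<psi> * Fpol D chi (1 - s) (cnj_char \<psi>)"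

definition Omega1 :: "nat \<Rightarrow> complex set" where
  "Omega1 D = {s. - 2 * sqrt (alpha D) < Re (s - s0 D) \<and> Re (s - s0 D) < 1
                 \<and> \<bar>Im (s - s0 D)\<bar> < 1 + 20 * LL D}"

definition Omega2 :: "nat \<Rightarrow> complex set" where
  "Omega2 D = {s. - (1/10) * alpha D * ln (LL D) < Re (s - s0 D) \<and> Re (s - s0 D) < 1/2
                 \<and> \<bar>Im (s - s0 D)\<bar> < 1 + 10 * LL D}"

definition Qset :: "nat \<Rightarrow> nat set" where
  "Qset D = {q. QQ D < real q \<and> real q < 2 * QQ D \<and> coprime q 6 \<and> squarefree q}"

definition Psi_q :: "nat \<Rightarrow> (nat \<Rightarrow> complex) \<Rightarrow> nat \<Rightarrow> (nat \<Rightarrow> complex) set" where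
  "Psi_q D chi q = {\<psi>. primitive_dchar q \<psi> \<and> primitive_dchar (lcm q D) (mult_char \<psi> chi)}"

definition Psi :: "nat \<Rightarrow> (nat \<Rightarrow> complex) \<Rightarrow> (nat \<Rightarrow> complex) set" where
  "Psi D chi = (\<Union>q\<in>Qset D. Psi_q D chi q)"

definition PsiStar :: "nat \<Rightarrow> (nat \<Rightarrow> complex) \<Rightarrow> (nat \<Rightarrow> complex) set" where
  "PsiStar D chi = {\<psi> \<in> Psi D chi.
     (SUP s\<in>Omega1 D. cmod (Fpol D chi s \<psi>) + cmod (Gpol D chi s \<psi>)) < LL D ^ 3 * ln (LL D)
   \<and> (SUP s\<in>Omega1 D. cmod (Fpol D chi s \<psi> * Gpol D chi s \<psi> - 1)) < 1/2
   \<and> (SUP s\<in>Omega2 D. cmod (Lfun s \<psi> * Lfun s (mult_char \<psi> chi) - FF D chi s \<psi>)) < LL D powr (-24/5)}"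

end

theory Submission
  imports Defs
begin

text \<open>Under (I1) and (I2), \<open>F(\<cdot>,\<psi>)\<close> is bounded by \<open>K = \<L>\<^sup>3 log \<L>\<close> and bounded below by
  \<open>1/(2K)\<close> on \<open>\<Omega>\<^sub>1\<close>, so it has a holomorphic logarithm there whose real part is \<open>O(log \<L>)\<close>.
  Every point of \<open>\<Omega>\<^sub>2\<close> is the centre of a disc of radius \<open>1/\<L>\<close> inside \<open>\<Omega>\<^sub>1\<close>, so the
  Borel--Caratheodory inequality bounds the derivative of the logarithm on \<open>\<Omega>\<^sub>2\<close> by
  \<open>O(\<L> log \<L>)\<close>. Hence \<open>log F(s) - log F(s') = O(|s - s'| \<L> log \<L>)\<close>, which is \<open>O(1)\<close>
  under the hypothesis on \<open>|s - s'|\<close>, and exponentiating gives the claim.\<close>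

lemma norm_le_norm_diff_of_Re_le:
  fixes u :: complex
  assumes "Re u \<le> A" and "A \<ge> 0"
  shows "norm u \<le> norm (2 * complex_of_real A - u)"
proof (rule power2_le_imp_le)
  have "0 \<le> 4 * A * (A - Re u)"
    using assms by simp
  moreover have "(norm u)\<^sup>2 = (Re u)\<^sup>2 + (Im u)\<^sup>2"
    and "(norm (2 * complex_of_real A - u))\<^sup>2 = (2 * A - Re u)\<^sup>2 + (Im u)\<^sup>2"
    by (simp_all add: cmod_power2)
  ultimately show "(norm u)\<^sup>2 \<le> (norm (2 * complex_of_real A - u))\<^sup>2"
    by (simp add: power2_eq_square algebra_simps)
qed simp

text \<open>Borel--Caratheodory at the centre: \<open>u \<mapsto> u / (2A - u)\<close> maps the half-plane
  \<open>Re u \<le> A\<close> into the closed unit disc, so Cauchy's inequality applies to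
  \<open>h = (f - f z) / (2A - (f - f z))\<close>, whose derivative at \<open>z\<close> is \<open>f'(z) / (2A)\<close>.\<close>

lemma norm_deriv_le_of_Re_le:
  assumes hol: "f holomorphic_on S" and "open S" and sub: "cball z r \<subseteq> S" and "r > 0"
    and "A > 0" and Re_le: "\<And>w. w \<in> cball z r \<Longrightarrow> Re (f w - f z) \<le> A"
  shows "norm (deriv f z) \<le> 2 * A / r"
proof -
  define c where "c = 2 * complex_of_real A"
  define u where "u w = f w - f z" for w
  define h where "h w = u w / (c - u w)" for w
  have den: "c - u w \<noteq> 0" if "w \<in> cball z r" for w
  proof
    assume "c - u w = 0"
    then have "Re (u w) = Re c" by simp
    then have "Re (u w) = 2 * A" by (simp add: c_def)
    with Re_le[OF that] \<open>A > 0\<close> show False by (simp add: u_def)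
  qed
  have h_deriv: "(h has_field_derivative
      (deriv f w * (c - u w) - u w * (0 - deriv f w)) / ((c - u w) * (c - u w))) (at w)"
    if w: "w \<in> cball z r" for w
  proof -
    have "(f has_field_derivative deriv f w) (at w)"
      using holomorphic_derivI[OF hol \<open>open S\<close>] w sub by blast
    then have du: "(u has_field_derivative deriv f w) (at w)"
      unfolding u_def[abs_def] using DERIV_diff[OF _ DERIV_const] by fastforce
    show ?thesis
      unfolding h_def[abs_def]
      by (rule DERIV_divide[OF du DERIV_diff[OF DERIV_const du] den[OF w]])
  qed
  have "deriv f z = c * deriv h z"
    using DERIV_imp_deriv[OF h_deriv[of z]] \<open>r > 0\<close> \<open>A > 0\<close> by (simp add: u_def c_def)
  then have "norm (deriv f z) = 2 * A * norm (deriv h z)"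
    using \<open>A > 0\<close> by (simp add: c_def norm_mult)
  also have "norm (deriv h z) \<le> 1 / r"
  proof -
    have "h holomorphic_on ball z r"
      unfolding holomorphic_on_def using h_deriv
      by (meson ball_subset_cball field_differentiable_at_within field_differentiable_def subsetD)
    moreover have "continuous_on (cball z r) h"
      by (rule continuous_at_imp_continuous_on) (use h_deriv DERIV_isCont in blast)
    moreover have "norm (h w) \<le> 1" if "norm (z - w) = r" for w
    proof -
      have w: "w \<in> cball z r" using that by (simp add: dist_norm)
      have "norm (u w) \<le> norm (c - u w)"
        unfolding c_def
        using norm_le_norm_diff_of_Re_le Re_le[OF w] \<open>A > 0\<close> by (simp add: u_def)
      then show ?thesis
        using den[OF w] by (simp add: h_def norm_divide divide_le_eq_1)
    qed
    ultimately show ?thesis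
      using Cauchy_inequality[of h z r 1 1] \<open>r > 0\<close> by simp
  qed
  finally show ?thesis
    using \<open>A > 0\<close> by (simp add: mult_left_mono)
qed

lemma holomorphic_quotient_near_one:
  fixes f :: "complex \<Rightarrow> complex"
  assumes hol: "f holomorphic_on S" and "open S" and "convex S"
    and bounds: "\<And>z. z \<in> S \<Longrightarrow> 1 / K < norm (f z) \<and> norm (f z) < K"
    and "convex T" and "r > 0" and balls: "\<And>z. z \<in> T \<Longrightarrow> cball z r \<subseteq> S"
    and s: "s \<in> T" and s': "s' \<in> T"
  shows "norm (f s / f s' - 1) \<le> exp (4 * ln K / r * norm (s - s')) * (4 * ln K / r * norm (s - s'))"
proof -
  have "s \<in> S" using balls[OF s] \<open>r > 0\<close> by auto
  have "K > 1"
    using bounds[OF \<open>s \<in> S\<close>] by (smt (verit) divide_less_eq_1 norm_ge_zero)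
  have f_nz: "f z \<noteq> 0" if "z \<in> S" for z
    using bounds[OF that] \<open>K > 1\<close> by (auto simp: field_simps)
  obtain g where g_hol: "g holomorphic_on S" and exp_g: "\<And>z. z \<in> S \<Longrightarrow> exp (g z) = f z"
    using holomorphic_logarithm_exists[OF \<open>convex S\<close> \<open>open S\<close> hol f_nz \<open>s \<in> S\<close>] by blast
  have Re_g: "\<bar>Re (g z)\<bar> < ln K" if "z \<in> S" for z
  proof -
    have "Re (g z) = ln (norm (f z))"
      using exp_g[OF that] by (metis ln_exp norm_exp_eq_Re)
    moreover have "ln (1 / K) < ln (norm (f z))" and "ln (norm (f z)) < ln K"
      using bounds[OF that] \<open>K > 1\<close> by (simp_all add: ln_less_cancel_iff f_nz[OF that])
    ultimately show ?thesis
      using \<open>K > 1\<close> by (simp add: ln_div)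
  qed
  have "T \<subseteq> S" using balls \<open>r > 0\<close> by fastforce
  have deriv_g: "norm (deriv g z) \<le> 4 * ln K / r" if z: "z \<in> T" for z
  proof -
    have "norm (deriv g z) \<le> 2 * (2 * ln K) / r"
    proof (rule norm_deriv_le_of_Re_le[OF g_hol \<open>open S\<close> balls[OF z] \<open>r > 0\<close>])
      show "2 * ln K > 0" using \<open>K > 1\<close> by simp
      show "Re (g w - g z) \<le> 2 * ln K" if "w \<in> cball z r" for w
        using Re_g[of w] Re_g[of z] that balls[OF z] \<open>T \<subseteq> S\<close> z by fastforce
    qed
    then show ?thesis by simp
  qed
  have g_lipschitz: "norm (g s - g s') \<le> 4 * ln K / r * norm (s - s')"
  proof (rule field_differentiable_bound[OF \<open>convex T\<close> _ deriv_g s s'])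
    show "(g has_field_derivative deriv g z) (at z within T)" if "z \<in> T" for z
      using holomorphic_derivI[OF g_hol \<open>open S\<close>] that \<open>T \<subseteq> S\<close>
      by (blast intro: has_field_derivative_at_within)
  qed
  have "f s / f s' - 1 = exp (g s - g s') - 1"
    using exp_g \<open>T \<subseteq> S\<close> s s' by (simp add: exp_diff subset_iff)
  also have "norm \<dots> \<le> exp (norm (g s - g s')) * norm (g s - g s')"
    using Taylor_exp_field[of "g s - g s'" 0] by simp
  also have "\<dots> \<le> exp (4 * ln K / r * norm (s - s')) * (4 * ln K / r * norm (s - s'))"
    using g_lipschitz by (intro mult_mono) auto
  finally show ?thesis .
qed

lemma less_of_SUP_less:
  fixes f :: "'a::heine_borel \<Rightarrow> real"
  assumes "bounded S" and "continuous_on (closure S) f" and "(SUP x\<in>S. f x) < c" and "x \<in> S"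
  shows "f x < c"
proof (rule cSUP_lessD[OF _ assms(3,4)])
  have "compact (f ` closure S)"
    using assms(1,2) by (intro compact_continuous_image) (auto simp: compact_closure)
  then have "bdd_above (f ` closure S)"
    by (intro bounded_imp_bdd_above compact_imp_bounded)
  then show "bdd_above (f ` S)"
    by (rule bdd_above_mono) (use closure_subset in auto)
qed

lemma Fpol_holomorphic: "(\<lambda>s. Fpol D chi s \<psi>) holomorphic_on A"
  unfolding Fpol_def by (intro holomorphic_on_sum holomorphic_intros holomorphic_on_powr_right) auto

lemma Gpol_holomorphic: "(\<lambda>s. Gpol D chi s \<psi>) holomorphic_on A"
  unfolding Gpol_def by (intro holomorphic_on_sum holomorphic_intros holomorphic_on_powr_right) auto

lemma Omega1_eq: "Omega1 D = {s. - 2 * sqrt (alpha D) + 1/2 < Re s} \<inter> {s. Re s < 3/2}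
   \<inter> {s. Im s < real D + 1 + 20 * LL D} \<inter> {s. real D - (1 + 20 * LL D) < Im s}"
  unfolding Omega1_def s0_def by auto

lemma Omega2_eq: "Omega2 D = {s. - (1/10) * alpha D * ln (LL D) + 1/2 < Re s} \<inter> {s. Re s < 1}
   \<inter> {s. Im s < real D + 1 + 10 * LL D} \<inter> {s. real D - (1 + 10 * LL D) < Im s}"
  unfolding Omega2_def s0_def by auto

lemma open_Omega1: "open (Omega1 D)"
  unfolding Omega1_eq
  by (intro open_Int open_halfspace_Re_gt open_halfspace_Re_lt open_halfspace_Im_gt open_halfspace_Im_lt)

lemma convex_Omega1: "convex (Omega1 D)"
  unfolding Omega1_eq
  by (intro convex_Int convex_halfspace_Re_gt convex_halfspace_Re_lt convex_halfspace_Im_gt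
      convex_halfspace_Im_lt)

lemma convex_Omega2: "convex (Omega2 D)"
  unfolding Omega2_eq
  by (intro convex_Int convex_halfspace_Re_gt convex_halfspace_Re_lt convex_halfspace_Im_gt
      convex_halfspace_Im_lt)

lemma bounded_Omega1: "bounded (Omega1 D)"
proof -
  have "Omega1 D \<subseteq> cball (s0 D) (2 * sqrt (alpha D) + 2 + 20 * LL D)"
  proof
    fix s assume "s \<in> Omega1 D"
    then have Re_bounds: "- 2 * sqrt (alpha D) < Re (s - s0 D)" "Re (s - s0 D) < 1"
      and "\<bar>Im (s - s0 D)\<bar> \<le> 1 + 20 * LL D"
      unfolding Omega1_def by auto
    moreover have "0 \<le> sqrt (alpha D)" by (simp add: alpha_def)
    ultimately have "\<bar>Re (s - s0 D)\<bar> \<le> 2 * sqrt (alpha D) + 1"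
      unfolding abs_le_iff by linarith
    with \<open>\<bar>Im (s - s0 D)\<bar> \<le> 1 + 20 * LL D\<close>
    show "s \<in> cball (s0 D) (2 * sqrt (alpha D) + 2 + 20 * LL D)"
      using cmod_le[of "s - s0 D"] by (simp add: dist_norm norm_minus_commute)
  qed
  then show ?thesis using bounded_cball bounded_subset by blast
qed

lemma cball_subset_Omega1:
  assumes L: "LL D \<ge> 3" and z: "z \<in> Omega2 D"
  shows "cball z (1 / LL D) \<subseteq> Omega1 D"
proof
  fix w assume w: "w \<in> cball z (1 / LL D)"
  define L where "L = LL D"
  have "L > 0" using L L_def by simp
  have dw: "\<bar>Re (w - z)\<bar> \<le> 1 / L" "\<bar>Im (w - z)\<bar> \<le> 1 / L"
    using w abs_Re_le_cmod[of "w - z"] abs_Im_le_cmod[of "w - z"]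
    by (auto simp: dist_norm norm_minus_commute L_def)
  have zb: "- (1/10) * alpha D * ln L < Re (z - s0 D)" "Re (z - s0 D) < 1/2"
    "\<bar>Im (z - s0 D)\<bar> < 1 + 10 * L"
    using z unfolding Omega2_def L_def by auto
  have alpha: "alpha D = 1 / L\<^sup>2"
    using \<open>L > 0\<close> unfolding alpha_def L_def by (simp add: powr_minus powr_realpow divide_inverse)
  then have sqrt_alpha: "sqrt (alpha D) = 1 / L"
    using \<open>L > 0\<close> by (simp add: real_sqrt_divide)
  have "(1/10) * alpha D * ln L = (ln L / L) / (10 * L)"
    using alpha \<open>L > 0\<close> by (simp add: power2_eq_square)
  also have "\<dots> \<le> 1 / (10 * L)"
    using ln_le_minus_one[of L] \<open>L > 0\<close> by (intro divide_right_mono) auto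
  also have "\<dots> \<le> 1 / L"
    using \<open>L > 0\<close> by (simp add: field_simps)
  finally have "(1/10) * alpha D * ln L \<le> 1 / L" .
  moreover have "1 / L \<le> 1/3" using L L_def by (simp add: field_simps)
  moreover have "Re (w - s0 D) = Re (z - s0 D) + Re (w - z)" "Im (w - s0 D) = Im (z - s0 D) + Im (w - z)"
    by simp_all
  ultimately show "w \<in> Omega1 D"
    unfolding Omega1_def sqrt_alpha L_def[symmetric] using dw zb L L_def
    by (simp only: mem_Collect_eq abs_le_iff abs_less_iff) linarith
qed

text \<open>(I1) bounds \<open>|F|\<close> and \<open>|G|\<close> by \<open>K\<close>; with (I2), \<open>|F| K > |F G| > 1/2\<close>.\<close>

lemma PsiStar_Fpol_bounds:
  assumes "LL D \<ge> 3" and "\<psi> \<in> PsiStar D chi" and z: "z \<in> Omega1 D"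
  defines "K \<equiv> LL D ^ 3 * ln (LL D)"
  shows "1 / (2 * K) < norm (Fpol D chi z \<psi>) \<and> norm (Fpol D chi z \<psi>) < K"
proof -
  let ?F = "Fpol D chi z \<psi>" and ?G = "Gpol D chi z \<psi>"
  have "K > 0" using \<open>LL D \<ge> 3\<close> by (simp add: K_def)
  have cont: "continuous_on (closure (Omega1 D)) (\<lambda>s. Fpol D chi s \<psi>)"
    "continuous_on (closure (Omega1 D)) (\<lambda>s. Gpol D chi s \<psi>)"
    by (simp_all add: holomorphic_on_imp_continuous_on Fpol_holomorphic Gpol_holomorphic)
  have I1: "(SUP s\<in>Omega1 D. norm (Fpol D chi s \<psi>) + norm (Gpol D chi s \<psi>)) < K"
    and I2: "(SUP s\<in>Omega1 D. norm (Fpol D chi s \<psi> * Gpol D chi s \<psi> - 1)) < 1/2"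
    using \<open>\<psi> \<in> PsiStar D chi\<close> unfolding PsiStar_def K_def by blast+
  have "norm ?F + norm ?G < K"
    using less_of_SUP_less[OF bounded_Omega1 _ I1 z] cont by (simp add: continuous_intros)
  then have "norm ?F < K" and "norm ?G < K" by (smt (verit) norm_ge_zero)+
  have FG: "norm (?F * ?G - 1) < 1/2"
    using less_of_SUP_less[OF bounded_Omega1 _ I2 z] cont by (simp add: continuous_intros)
  have "1/2 < norm (?F * ?G)"
    using FG norm_triangle_ineq2[of 1 "?F * ?G"] by (simp add: norm_minus_commute)
  also have "\<dots> \<le> norm ?F * K"
    using \<open>norm ?G < K\<close> by (simp add: norm_mult mult_left_mono)
  finally show ?thesis
    using \<open>norm ?F < K\<close> \<open>K > 0\<close> by (simp add: field_simps)
qed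

lemma ln_two_mult_cube_ln_bounds:
  assumes "L \<ge> (3::real)"
  shows "0 \<le> ln (2 * (L ^ 3 * ln L)) \<and> ln (2 * (L ^ 3 * ln L)) \<le> 5 * ln L"
proof
  have "1 \<le> ln L"
    using assms exp_le by (subst ln_ge_iff) auto
  moreover have "1 \<le> L ^ 3"
    using assms by (simp add: one_le_power)
  ultimately have "1 \<le> L ^ 3 * ln L"
    using mult_mono[of 1 "L ^ 3" 1 "ln L"] assms by simp
  then show "0 \<le> ln (2 * (L ^ 3 * ln L))"
    by simp
  have "2 * (L ^ 3 * ln L) \<le> L * (L ^ 3 * L)"
    using assms ln_le_minus_one[of L] by (intro mult_mono) auto
  then have "ln (2 * (L ^ 3 * ln L)) \<le> ln (L ^ 5)"
    using \<open>1 \<le> L ^ 3 * ln L\<close> by (subst ln_le_cancel_iff) (auto simp: power_def)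
  also have "\<dots> = 5 * ln L" using assms by (simp add: ln_realpow)
  finally show "ln (2 * (L ^ 3 * ln L)) \<le> 5 * ln L" .
qed

lemma LL_ge_3:
  assumes "real D > exp 3"
  shows "LL D \<ge> 3"
proof -
  have "real D > 0"
    using assms exp_gt_zero[of 3] by linarith
  with assms show ?thesis
    unfolding LL_def by (subst ln_ge_iff) auto
qed

lemma Fpol_quotient_bound:
  assumes L: "LL D \<ge> 3" and \<psi>: "\<psi> \<in> PsiStar D chi" and s: "s \<in> Omega2 D" and s': "s' \<in> Omega2 D"
  defines "\<delta> \<equiv> 20 * (cmod (s - s') * LL D * ln (LL D))"
  shows "cmod (Fpol D chi s \<psi> / Fpol D chi s' \<psi> - 1) \<le> exp \<delta> * \<delta>"
proof -
  define K where "K = LL D ^ 3 * ln (LL D)"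
  define \<epsilon> where "\<epsilon> = 4 * ln (2 * K) / (1 / LL D) * cmod (s - s')"
  have "K > 0" using L by (simp add: K_def)
  have F_bounds: "1 / (2 * K) < cmod (Fpol D chi z \<psi>) \<and> cmod (Fpol D chi z \<psi>) < 2 * K"
    if "z \<in> Omega1 D" for z
    using PsiStar_Fpol_bounds[OF L \<psi> that] \<open>K > 0\<close> unfolding K_def by linarith
  have "cmod (Fpol D chi s \<psi> / Fpol D chi s' \<psi> - 1) \<le> exp \<epsilon> * \<epsilon>"
    unfolding \<epsilon>_def
    by (rule holomorphic_quotient_near_one[OF Fpol_holomorphic open_Omega1[of D] convex_Omega1
          F_bounds convex_Omega2 _ cball_subset_Omega1[OF L] s s']) (use L in auto)
  also have "\<dots> \<le> exp \<delta> * \<delta>"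
  proof -
    have "\<epsilon> = 4 * LL D * cmod (s - s') * ln (2 * K)"
      by (simp add: \<epsilon>_def)
    also have "\<dots> \<le> 4 * LL D * cmod (s - s') * (5 * ln (LL D))"
      using ln_two_mult_cube_ln_bounds[OF L] L by (intro mult_left_mono) (auto simp: K_def)
    finally have "\<epsilon> \<le> \<delta>"
      by (simp add: \<delta>_def ac_simps)
    moreover have "\<epsilon> \<ge> 0"
      using ln_two_mult_cube_ln_bounds[OF L] L by (simp add: \<epsilon>_def K_def)
    ultimately show ?thesis
      by (intro mult_mono) auto
  qed
  finally show ?thesis .
qed

theorem corollary2p9:
  shows "\<exists>C D0::real. \<forall>D chi. real D > D0 \<and> real_primitive_dchar D chi \<longrightarrow>
     (\<forall>\<psi>\<in>PsiStar D chi. \<forall>s\<in>Omega2 D. \<forall>s'\<in>Omega2 D.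
        cmod (s - s') \<le> 1 / (LL D * ln (LL D)) \<longrightarrow>
        cmod (Fpol D chi s \<psi> / Fpol D chi s' \<psi> - 1) \<le> C * (cmod (s - s') * LL D * ln (LL D)))"
proof (intro exI allI impI ballI)
  fix D :: nat and chi \<psi> s s'
  assume D: "real D > exp 3 \<and> real_primitive_dchar D chi" and \<psi>: "\<psi> \<in> PsiStar D chi"
    and s: "s \<in> Omega2 D" and s': "s' \<in> Omega2 D" and close: "cmod (s - s') \<le> 1 / (LL D * ln (LL D))"
  define \<delta> where "\<delta> = 20 * (cmod (s - s') * LL D * ln (LL D))"
  have L: "LL D \<ge> 3" using D LL_ge_3 by blast
  have "cmod (Fpol D chi s \<psi> / Fpol D chi s' \<psi> - 1) \<le> exp \<delta> * \<delta>"
    unfolding \<delta>_def by (rule Fpol_quotient_bound[OF L \<psi> s s'])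
  also have "\<dots> \<le> exp 20 * \<delta>"
  proof -
    have "cmod (s - s') * LL D * ln (LL D) \<le> 1"
      using close L by (simp add: field_simps)
    then show ?thesis
      using L by (intro mult_right_mono) (auto simp: \<delta>_def)
  qed
  finally show "cmod (Fpol D chi s \<psi> / Fpol D chi s' \<psi> - 1)
      \<le> (20 * exp 20) * (cmod (s - s') * LL D * ln (LL D))"
    by (simp add: \<delta>_def)
qed

end
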